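(* A function $\gamma:\mathbb{R}^d\times\mathcal{W}\to\mathbb{R}$ is $\mathcal{F}$-local covariogram admissible if and only if it is $\mathcal{M}$-local covariogram admissible.
   Context: $\mathcal{M}$: Lebesgue measurable subsets of $\mathbb{R}^d$; $\mathcal{F}$: closed subsets of $\mathbb{R}^d$. $\mathcal{W}$: bounded open $W$ with $\mathcal{L}^d(\partial W)=0$; $\delta_{y;W}(A)=\mathcal{L}^d(A\cap(y+A)\cap W)$. For $\mathcal{C}\in\{\mathcal{M},\mathcal{F}\}$, $\gamma$ is $\mathcal{C}$-local covariogram admissible if for all $q\ge1$, $a\in\mathbb{R}^q$, $y_i\in\mathbb{R}^d$, $W_i\in\mathcal{W}$, $c\in\mathbb{R}$: $[c+\sum_ia_i\delta_{y_i;W_i}(A)\ge0\ \forall A\in\mathcal{C}]\Rightarrow c+\sum_ia_i\gamma(y_i;W_i)\ge0$. *)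

theory Defs
  imports "HOL-Analysis.Analysis"
begin

definition Wclass :: "'a::euclidean_space set set" where
  "Wclass = {W. bounded W \<and> open W \<and> emeasure lebesgue (frontier W) = 0}"

definition local_cov :: "'a::euclidean_space \<Rightarrow> 'a set \<Rightarrow> 'a set \<Rightarrow> real" where
  "local_cov y W A = measure lebesgue (A \<inter> ((+) y ` A) \<inter> W)"

definition Mclass :: "'a::euclidean_space set set" where
  "Mclass = sets lebesgue"

definition Fclass :: "'a::euclidean_space set set" where
  "Fclass = {A. closed A}"

text \<open>C-local covariogram admissibility of gamma : R^d x W -> R
  (only the values at windows W in Wclass are ever used).\<close>
definition local_cov_admissible ::
  "'a::euclidean_space set set \<Rightarrow> ('a \<Rightarrow> 'a set \<Rightarrow> real) \<Rightarrow> bool" where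
  "local_cov_admissible C \<gamma> \<longleftrightarrow>
    (\<forall>q::nat. \<forall>a::nat \<Rightarrow> real. \<forall>y::nat \<Rightarrow> 'a. \<forall>W::nat \<Rightarrow> 'a set. \<forall>c::real.
       q \<ge> 1 \<longrightarrow> (\<forall>i<q. W i \<in> Wclass) \<longrightarrow>
       (\<forall>A\<in>C. c + (\<Sum>i<q. a i * local_cov (y i) (W i) A) \<ge> 0) \<longrightarrow>
       c + (\<Sum>i<q. a i * \<gamma> (y i) (W i)) \<ge> 0)"

end

theory Submission
  imports Defs
begin

text \<open>Every closed set is Lebesgue measurable, so M-admissibility trivially implies
  F-admissibility. Conversely, a measurable A contains closed sets T with
  L(A - T) arbitrarily small, and removing a set of measure m from A changes each
  local covariogram by at most 2m (m from A itself, m from its translate). Hence a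
  linear constraint c + \<Sum> a_i \<delta>_{y_i;W_i} \<ge> 0 that holds on closed sets
  holds on measurable sets, and the two admissibility notions coincide.\<close>

lemma local_cov_mono:
  fixes A T W :: "'a::euclidean_space set"
  assumes "T \<subseteq> A" "A \<in> sets lebesgue" "T \<in> sets lebesgue"
    and "bounded W" "W \<in> sets lebesgue"
  shows "local_cov y W T \<le> local_cov y W A"
proof -
  have big: "A \<inter> (+) y ` A \<inter> W \<in> lmeasurable"
    using assms
    by (intro bounded_set_imp_lmeasurable sets.Int lebesgue_sets_translation bounded_Int) auto
  have small: "T \<inter> (+) y ` T \<inter> W \<in> sets lebesgue"
    using assms by (auto intro!: sets.Int lebesgue_sets_translation)
  have "T \<inter> (+) y ` T \<inter> W \<subseteq> A \<inter> (+) y ` A \<inter> W"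
    using \<open>T \<subseteq> A\<close> by auto
  then show ?thesis
    unfolding local_cov_def using measure_mono_fmeasurable small big by blast
qed

lemma local_cov_le_remove:
  fixes A T W :: "'a::euclidean_space set"
  assumes "T \<subseteq> A" "A \<in> sets lebesgue" "T \<in> sets lebesgue" "A - T \<in> lmeasurable"
    and "bounded W" "W \<in> sets lebesgue"
  shows "local_cov y W A \<le> local_cov y W T + 2 * measure lebesgue (A - T)"
proof -
  define S where "S = A \<inter> (+) y ` A \<inter> W"
  define S' where "S' = T \<inter> (+) y ` T \<inter> W"
  have S: "S \<in> lmeasurable" and S': "S' \<in> lmeasurable"
    unfolding S_def S'_def
    by (auto intro!: bounded_set_imp_lmeasurable sets.Int lebesgue_sets_translation
        bounded_subset[OF \<open>bounded W\<close>] simp: assms)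
  have transl: "(+) y ` (A - T) \<in> lmeasurable"
    using \<open>A - T \<in> lmeasurable\<close> by (rule measurable_translation)
  have "measure lebesgue S - measure lebesgue S' = measure lebesgue (S - S')"
    by (rule measure_Diff[symmetric])
      (use S S' \<open>T \<subseteq> A\<close> in \<open>auto simp: fmeasurable_def S_def S'_def\<close>)
  also have "\<dots> \<le> measure lebesgue ((A - T) \<union> (+) y ` (A - T))"
    by (rule measure_mono_fmeasurable) (use assms transl S S' in \<open>auto simp: S_def S'_def\<close>)
  also have "\<dots> \<le> measure lebesgue (A - T) + measure lebesgue ((+) y ` (A - T))"
    using assms transl by (intro measure_Un_le) auto
  also have "\<dots> = 2 * measure lebesgue (A - T)"
    by (simp add: measure_translation)
  finally show ?thesis
    unfolding local_cov_def S_def[symmetric] S'_def[symmetric] by linarith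
qed

lemma sets_lebesgue_inner_closed_measure:
  fixes A :: "'a::euclidean_space set"
  assumes "A \<in> sets lebesgue" "e > 0"
  obtains T where "closed T" "T \<subseteq> A" "A - T \<in> lmeasurable" "measure lebesgue (A - T) < e"
proof -
  obtain T where "closed T" "T \<subseteq> A" "A - T \<in> lmeasurable" "emeasure lebesgue (A - T) < ennreal e"
    using sets_lebesgue_inner_closed[OF assms] by blast
  then show ?thesis
    using that \<open>e > 0\<close> by (simp add: emeasure_eq_measure2 ennreal_less_iff)
qed

lemma sum_local_cov_closed_approx:
  fixes A :: "'a::euclidean_space set"
  assumes A: "A \<in> sets lebesgue" and "e > 0" and W: "\<forall>i<q. W i \<in> Wclass"
  obtains T where "closed T"
    "\<bar>(\<Sum>i<q. a i * local_cov (y i) (W i) A) - (\<Sum>i<q. a i * local_cov (y i) (W i) T)\<bar> \<le> e"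
proof -
  define K where "K = (\<Sum>i<q. \<bar>a i\<bar>)"
  have "K \<ge> 0" unfolding K_def by (simp add: sum_nonneg)
  obtain T where T: "closed T" "T \<subseteq> A" "A - T \<in> lmeasurable"
    and small: "measure lebesgue (A - T) < e / (2 * (K + 1))"
    using sets_lebesgue_inner_closed_measure[OF A, of "e / (2 * (K + 1))"] \<open>e > 0\<close> \<open>K \<ge> 0\<close>
    by auto
  define m where "m = measure lebesgue (A - T)"
  have diff: "\<bar>local_cov (y i) (W i) A - local_cov (y i) (W i) T\<bar> \<le> 2 * m" if "i < q" for i
  proof -
    have "bounded (W i)" "W i \<in> sets lebesgue"
      using W that by (auto simp: Wclass_def borel_open)
    moreover have "T \<in> sets lebesgue"
      using \<open>closed T\<close> by (simp add: borel_closed)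
    ultimately show ?thesis
      using local_cov_mono[of T A "W i" "y i"] local_cov_le_remove[of T A "W i" "y i"] T A
      unfolding m_def by linarith
  qed
  have "\<bar>(\<Sum>i<q. a i * local_cov (y i) (W i) A) - (\<Sum>i<q. a i * local_cov (y i) (W i) T)\<bar>
        \<le> (\<Sum>i<q. \<bar>a i * (local_cov (y i) (W i) A - local_cov (y i) (W i) T)\<bar>)"
    by (simp add: sum_subtractf[symmetric] right_diff_distrib[symmetric] sum_abs)
  also have "\<dots> \<le> (\<Sum>i<q. \<bar>a i\<bar> * (2 * m))"
    by (rule sum_mono) (auto simp: abs_mult intro!: mult_left_mono diff)
  also have "\<dots> = K * (2 * m)"
    by (simp add: K_def sum_distrib_right)
  also have "\<dots> \<le> e"
  proof -
    have "m * (2 * (K + 1)) < e"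
      using small \<open>K \<ge> 0\<close> unfolding m_def by (simp add: less_divide_eq)
    moreover have "m * (2 * (K + 1)) = K * (2 * m) + 2 * m"
      by (simp add: algebra_simps)
    moreover have "m \<ge> 0"
      unfolding m_def by simp
    ultimately show ?thesis
      by linarith
  qed
  finally show ?thesis
    using that \<open>closed T\<close> by blast
qed

lemma sum_local_cov_nonneg_closed_imp_measurable:
  fixes A :: "'a::euclidean_space set"
  assumes closed_nonneg: "\<forall>T. closed T \<longrightarrow> 0 \<le> c + (\<Sum>i<q. a i * local_cov (y i) (W i) T)"
    and W: "\<forall>i<q. W i \<in> Wclass" and A: "A \<in> sets lebesgue"
  shows "0 \<le> c + (\<Sum>i<q. a i * local_cov (y i) (W i) A)"
proof (rule field_le_epsilon)
  fix e :: real
  assume "e > 0"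
  then obtain T where "closed T"
    "\<bar>(\<Sum>i<q. a i * local_cov (y i) (W i) A) - (\<Sum>i<q. a i * local_cov (y i) (W i) T)\<bar> \<le> e"
    using sum_local_cov_closed_approx[OF A _ W] by blast
  then show "0 \<le> c + (\<Sum>i<q. a i * local_cov (y i) (W i) A) + e"
    using closed_nonneg by force
qed

lemma local_cov_admissible_mono:
  assumes "C \<subseteq> C'" "local_cov_admissible C \<gamma>"
  shows "local_cov_admissible C' \<gamma>"
  using assms unfolding local_cov_admissible_def by blast

theorem proposition4p11:
  fixes \<gamma> :: "'a::euclidean_space \<Rightarrow> 'a set \<Rightarrow> real"
  shows "local_cov_admissible Fclass \<gamma> \<longleftrightarrow> local_cov_admissible Mclass \<gamma>"
proof
  assume "local_cov_admissible Fclass \<gamma>"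
  moreover have "Fclass \<subseteq> (Mclass :: 'a set set)"
    by (auto simp: Fclass_def Mclass_def borel_closed)
  ultimately show "local_cov_admissible Mclass \<gamma>"
    by (rule local_cov_admissible_mono[rotated])
next
  assume M: "local_cov_admissible Mclass \<gamma>"
  show "local_cov_admissible Fclass \<gamma>"
    unfolding local_cov_admissible_def
  proof (intro allI impI)
    fix q :: nat and a :: "nat \<Rightarrow> real" and y :: "nat \<Rightarrow> 'a" and W :: "nat \<Rightarrow> 'a set" and c :: real
    assume "1 \<le> q" and W: "\<forall>i<q. W i \<in> Wclass"
      and F: "\<forall>A\<in>Fclass. 0 \<le> c + (\<Sum>i<q. a i * local_cov (y i) (W i) A)"
    have "\<forall>A\<in>Mclass. 0 \<le> c + (\<Sum>i<q. a i * local_cov (y i) (W i) A)"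
      using sum_local_cov_nonneg_closed_imp_measurable[OF _ W] F
      by (simp add: Fclass_def Mclass_def)
    then show "0 \<le> c + (\<Sum>i<q. a i * \<gamma> (y i) (W i))"
      using M \<open>1 \<le> q\<close> W unfolding local_cov_admissible_def by blast
  qed
qed

end
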